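(* Let $n>1$ be an integer and let $\pi_2,\ldots,\pi_{n-1}\in[0,1]$ be arbitrary. Consider the Markov chain $X_0,X_1,\ldots$ on the state space $\{1,\ldots,n\}$ with transition probabilities $$p_{1,2}=p_{n,n-1}=1,\qquad p_{i,i+1}=\pi_i,\quad p_{i,i-1}=1-\pi_i \quad (2\le i\le n-1).$$ All other transition probabilities are $0$. For states $i,j$, let $T_{i,j}=\min\{t>0: X_t=j\}$ be the hitting time of $j$ when the chain is started at $X_0=i$. Then $$\mathrm{E}\{T_{1,n}+T_{n,1}\}\ge 2(n-1)^2.$$
   Context: Expectations may be infinite. In that case the inequality holds trivially. *)

theory Defs
  imports "HOL-Probability.Probability"
begin

definition trans_prob :: "nat \<Rightarrow> (nat \<Rightarrow> real) \<Rightarrow> nat \<Rightarrow> nat \<Rightarrow> real" where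
  "trans_prob n \<pi> i j =
     (if i = 1 then (if j = 2 then 1 else 0)
      else if i = n then (if j = n - 1 then 1 else 0)
      else if 2 \<le> i \<and> i \<le> n - 1 then
        (if j = i + 1 then \<pi> i else if j = i - 1 then 1 - \<pi> i else 0)
      else 0)"

text \<open>X is a Markov chain on the probability space M with transition probabilities
  trans_prob n pi and started at X 0 = i0: all finite-dimensional distributions are
  given by products of transition probabilities.\<close>
definition is_chain ::
  "'w measure \<Rightarrow> (nat \<Rightarrow> 'w \<Rightarrow> nat) \<Rightarrow> nat \<Rightarrow> (nat \<Rightarrow> real) \<Rightarrow> nat \<Rightarrow> bool" where
  "is_chain M X n \<pi> i0 \<longleftrightarrow>
     prob_space M \<and>
     (\<forall>t. X t \<in> measurable M (count_space UNIV)) \<and>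
     (\<forall>t xs. length xs = Suc t \<longrightarrow>
        measure M {\<omega> \<in> space M. \<forall>k\<le>t. X k \<omega> = xs ! k} =
          (if xs ! 0 = i0 then (\<Prod>k<t. trans_prob n \<pi> (xs ! k) (xs ! Suc k)) else 0))"

definition hit_time :: "(nat \<Rightarrow> 'w \<Rightarrow> nat) \<Rightarrow> nat \<Rightarrow> 'w \<Rightarrow> ennreal" where
  "hit_time X j \<omega> =
     (if \<exists>t>0. X t \<omega> = j then of_nat (LEAST t. t > 0 \<and> X t \<omega> = j) else \<infinity>)"

end

theory Submission
  imports Defs
begin

text \<open>
  Write \<open>u\<^sub>k\<close> and \<open>d\<^sub>k\<close> for the expected times to cross the edge \<open>{k, k+1}\<close> upwards and
  downwards, so that \<open>E T\<^sub>1\<^sub>,\<^sub>n = \<Sum> u\<^sub>k\<close> and \<open>E T\<^sub>n\<^sub>,\<^sub>1 = \<Sum> d\<^sub>k\<close>. First-step analysis gives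
  \<open>\<pi>\<^sub>k u\<^sub>k = 1 + (1 - \<pi>\<^sub>k) u\<^sub>k\<^sub>-\<^sub>1\<close> and \<open>(1 - \<pi>\<^sub>k) d\<^sub>k\<^sub>-\<^sub>1 = 1 + \<pi>\<^sub>k d\<^sub>k\<close>. With edge weights
  \<open>c\<^sub>k\<close> satisfying \<open>c\<^sub>k (1 - \<pi>\<^sub>k) = c\<^sub>k\<^sub>-\<^sub>1 \<pi>\<^sub>k\<close> these recurrences solve to
  \<open>u\<^sub>k + d\<^sub>k = 2 (\<Sum>\<^sub>j c\<^sub>j) / c\<^sub>k\<close>, and Cauchy-Schwarz gives
  \<open>(\<Sum>\<^sub>j c\<^sub>j)(\<Sum>\<^sub>k 1/c\<^sub>k) \<ge> (n - 1)\<^sup>2\<close>.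
  The expectations are approached from below through path sums of transition
  probabilities, so no Markov property beyond the finite-dimensional distributions is needed;
  if an expectation is infinite there is nothing to prove, and finiteness is what forces
  \<open>0 < \<pi>\<^sub>k < 1\<close>.
\<close>

definition path_weight :: "('s \<Rightarrow> 's \<Rightarrow> real) \<Rightarrow> nat \<Rightarrow> 's list \<Rightarrow> real" where
  "path_weight P t xs = (\<Prod>k<t. P (xs ! k) (xs ! Suc k))"

definition avoiding_paths :: "'s set \<Rightarrow> 's \<Rightarrow> nat \<Rightarrow> 's \<Rightarrow> 's list set" where
  "avoiding_paths S j t i =
     {xs. length xs = Suc t \<and> set xs \<subseteq> S \<and> xs ! 0 = i \<and> (\<forall>k\<in>{1..t}. xs ! k \<noteq> j)}"

primrec survival :: "('s \<Rightarrow> 's \<Rightarrow> real) \<Rightarrow> 's set \<Rightarrow> 's \<Rightarrow> nat \<Rightarrow> 's \<Rightarrow> real" where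
  "survival P S j 0 i = 1"
| "survival P S j (Suc t) i = (\<Sum>i'\<in>S - {j}. P i i' * survival P S j t i')"

lemma finite_avoiding_paths: "finite S \<Longrightarrow> finite (avoiding_paths S j t i)"
  by (rule finite_subset[OF _ finite_lists_length_eq[of S "Suc t"]]) (auto simp: avoiding_paths_def)

lemma avoiding_paths_0: "i \<in> S \<Longrightarrow> avoiding_paths S j 0 i = {[i]}"
  by (auto simp: avoiding_paths_def length_Suc_conv)

lemma avoiding_paths_Suc:
  assumes "i \<in> S"
  shows "avoiding_paths S j (Suc t) i = Cons i ` (\<Union>i'\<in>S - {j}. avoiding_paths S j t i')"
proof (intro equalityI subsetI)
  fix xs assume "xs \<in> avoiding_paths S j (Suc t) i"
  then obtain ys where xs: "xs = i # ys" and ys: "length ys = Suc t" "set ys \<subseteq> S"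
      "\<forall>k\<in>{1..Suc t}. (i # ys) ! k \<noteq> j"
    unfolding avoiding_paths_def by (auto simp: length_Suc_conv)
  have "ys ! 0 \<in> S - {j}" using ys nth_mem[of 0 ys] by (auto dest: bspec[of _ _ 1])
  moreover have "ys \<in> avoiding_paths S j t (ys ! 0)"
    using ys unfolding avoiding_paths_def by (auto dest: bspec[of _ _ "Suc _"])
  ultimately show "xs \<in> Cons i ` (\<Union>i'\<in>S - {j}. avoiding_paths S j t i')" using xs by blast
next
  fix xs assume "xs \<in> Cons i ` (\<Union>i'\<in>S - {j}. avoiding_paths S j t i')"
  then obtain i' ys where xs: "xs = i # ys" and i': "i' \<in> S - {j}"
    and ys: "ys \<in> avoiding_paths S j t i'" by blast
  have "xs ! k \<noteq> j" if "k \<in> {1..Suc t}" for k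
    using that xs i' ys by (cases k; cases "k = 1") (auto simp: avoiding_paths_def)
  then show "xs \<in> avoiding_paths S j (Suc t) i"
    using xs ys assms by (auto simp: avoiding_paths_def)
qed

lemma sum_path_weight_avoiding_paths:
  assumes "finite S" "i \<in> S"
  shows "(\<Sum>xs\<in>avoiding_paths S j t i. path_weight P t xs) = survival P S j t i"
  using assms(2)
proof (induction t arbitrary: i)
  case 0
  then show ?case by (simp add: avoiding_paths_0 path_weight_def)
next
  case (Suc t)
  have "(\<Sum>xs\<in>avoiding_paths S j (Suc t) i. path_weight P (Suc t) xs)
      = (\<Sum>ys\<in>(\<Union>i'\<in>S - {j}. avoiding_paths S j t i'). path_weight P (Suc t) (i # ys))"
    unfolding avoiding_paths_Suc[OF Suc.prems] by (simp add: sum.reindex)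
  also have "\<dots> = (\<Sum>i'\<in>S - {j}. \<Sum>ys\<in>avoiding_paths S j t i'. path_weight P (Suc t) (i # ys))"
    by (rule sum.UNION_disjoint)
       (simp_all add: assms(1) finite_avoiding_paths, auto simp: avoiding_paths_def)
  also have "\<dots> = (\<Sum>i'\<in>S - {j}. \<Sum>ys\<in>avoiding_paths S j t i'. P i i' * path_weight P t ys)"
    by (intro sum.cong refl)
       (auto simp: avoiding_paths_def path_weight_def prod.lessThan_Suc_shift simp del: prod.lessThan_Suc)
  also have "\<dots> = survival P S j (Suc t) i"
    by (simp add: sum_distrib_left[symmetric] Suc.IH)
  finally show ?case .
qed

definition survival_sum :: "('s \<Rightarrow> 's \<Rightarrow> real) \<Rightarrow> 's set \<Rightarrow> 's \<Rightarrow> 's \<Rightarrow> ennreal" where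
  "survival_sum P S j i = (\<Sum>t. ennreal (survival P S j t i))"

lemma survival_nonneg: "(\<And>i i'. 0 \<le> P i i') \<Longrightarrow> 0 \<le> survival P S j t i"
  by (induction t arbitrary: i) (auto intro!: sum_nonneg)

lemma sum_Diff_singleton_fun_upd:
  fixes V :: "'a \<Rightarrow> 'b::comm_semiring_0"
  assumes "finite A"
  shows "(\<Sum>j\<in>A - {a}. f j * V j) = (\<Sum>j\<in>A. f j * (V(a := 0)) j)"
proof (cases "a \<in> A")
  case True
  have "(\<Sum>j\<in>A. f j * (V(a := 0)) j) = f a * (V(a := 0)) a + (\<Sum>j\<in>A - {a}. f j * (V(a := 0)) j)"
    by (rule sum.remove[OF assms True])
  also have "\<dots> = (\<Sum>j\<in>A - {a}. f j * V j)"
    by (simp cong: sum.cong_simp)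
  finally show ?thesis ..
next
  case False
  then show ?thesis by (intro sum.cong) auto
qed

lemma survival_sum_first_step:
  assumes "\<And>i i'. 0 \<le> P i i'" and "finite S"
  shows "survival_sum P S j i = 1 + (\<Sum>i'\<in>S. ennreal (P i i') * ((survival_sum P S j)(j := 0)) i')"
proof -
  have "(\<Sum>t. ennreal (survival P S j (Suc t) i))
      = (\<Sum>t. \<Sum>i'\<in>S - {j}. ennreal (P i i') * ennreal (survival P S j t i'))"
    by (simp add: sum_ennreal[symmetric] ennreal_mult' assms survival_nonneg)
  also have "\<dots> = (\<Sum>i'\<in>S - {j}. ennreal (P i i') * (\<Sum>t. ennreal (survival P S j t i')))"
    by (simp add: suminf_sum ennreal_suminf_cmult)
  finally have "(\<lambda>t. ennreal (survival P S j (Suc t) i)) sums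
                  (\<Sum>i'\<in>S - {j}. ennreal (P i i') * (\<Sum>t. ennreal (survival P S j t i')))"
    using summable_sums[OF summableI] by metis
  from sums_Suc[OF this]
  have "survival_sum P S j i = 1 + (\<Sum>i'\<in>S - {j}. ennreal (P i i') * survival_sum P S j i')"
    by (simp add: survival_sum_def sums_iff add.commute)
  then show ?thesis
    by (simp only: sum_Diff_singleton_fun_upd[OF \<open>finite S\<close>])
qed

lemma suminf_indicator_avoid_le_hit_time:
  "(\<Sum>t. indicator {\<omega>\<in>\<Omega>. \<forall>k\<in>{1..t}. X k \<omega> \<noteq> j} \<omega> :: ennreal) \<le> hit_time X j \<omega>"
proof (cases "\<exists>t>0. X t \<omega> = j")
  case False
  then show ?thesis unfolding hit_time_def if_not_P[OF False] by simp
next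
  case True
  define \<tau> where "\<tau> = (LEAST t. t > 0 \<and> X t \<omega> = j)"
  have \<tau>: "\<tau> > 0" "X \<tau> \<omega> = j"
    using LeastI_ex[OF True] unfolding \<tau>_def by auto
  have "(\<Sum>t. indicator {\<omega>\<in>\<Omega>. \<forall>k\<in>{1..t}. X k \<omega> \<noteq> j} \<omega> :: ennreal)
      = (\<Sum>t<\<tau>. indicator {\<omega>\<in>\<Omega>. \<forall>k\<in>{1..t}. X k \<omega> \<noteq> j} \<omega>)"
    by (rule suminf_finite) (use \<tau> in \<open>auto simp: indicator_def not_less\<close>)
  also have "\<dots> \<le> (\<Sum>t<\<tau>. 1)"
    by (intro sum_mono) (simp add: indicator_def)
  also have "\<dots> = hit_time X j \<omega>"
    using True by (simp add: hit_time_def \<tau>_def)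
  finally show ?thesis .
qed

lemma survival_le_prob_avoid:
  assumes chain: "is_chain M X n \<pi> i" and i: "i \<in> {1..n}"
  shows "survival (trans_prob n \<pi>) {1..n} j t i \<le> measure M {\<omega>\<in>space M. \<forall>k\<in>{1..t}. X k \<omega> \<noteq> j}"
proof -
  interpret prob_space M using chain by (simp add: is_chain_def)
  have [measurable]: "X k \<in> measurable M (count_space UNIV)" for k
    using chain by (simp add: is_chain_def)
  define E where "E xs = {\<omega> \<in> space M. \<forall>k\<le>t. X k \<omega> = xs ! k}" for xs
  have E_sets: "E xs \<in> sets M" for xs unfolding E_def by measurable
  have disj: "disjoint_family_on E (avoiding_paths {1..n} j t i)"
    unfolding disjoint_family_on_def
  proof (intro ballI impI)
    fix xs ys assume "xs \<in> avoiding_paths {1..n} j t i" "ys \<in> avoiding_paths {1..n} j t i" "xs \<noteq> ys"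
    then have "length xs = Suc t" "length ys = Suc t" "xs \<noteq> ys"
      by (simp_all add: avoiding_paths_def)
    then obtain k where "k \<le> t" "xs ! k \<noteq> ys ! k"
      using nth_equalityI less_Suc_eq_le by metis
    then show "E xs \<inter> E ys = {}" unfolding E_def by auto
  qed
  have "survival (trans_prob n \<pi>) {1..n} j t i
      = (\<Sum>xs\<in>avoiding_paths {1..n} j t i. path_weight (trans_prob n \<pi>) t xs)"
    using sum_path_weight_avoiding_paths[of "{1..n}" i] i by simp
  also have "\<dots> = (\<Sum>xs\<in>avoiding_paths {1..n} j t i. measure M (E xs))"
    using chain by (intro sum.cong refl) (auto simp: E_def is_chain_def path_weight_def avoiding_paths_def)
  also have "\<dots> = measure M (\<Union>xs\<in>avoiding_paths {1..n} j t i. E xs)"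
    using E_sets disj by (intro finite_measure_finite_Union[symmetric]) (auto simp: finite_avoiding_paths)
  also have "\<dots> \<le> measure M {\<omega>\<in>space M. \<forall>k\<in>{1..t}. X k \<omega> \<noteq> j}"
    by (rule finite_measure_mono) (unfold E_def avoiding_paths_def, fastforce, measurable)
  finally show ?thesis .
qed

lemma survival_sum_le_expected_hit_time:
  assumes chain: "is_chain M X n \<pi> i" and i: "i \<in> {1..n}"
  shows "survival_sum (trans_prob n \<pi>) {1..n} j i \<le> (\<integral>\<^sup>+ \<omega>. hit_time X j \<omega> \<partial>M)"
proof -
  interpret prob_space M using chain by (simp add: is_chain_def)
  have [measurable]: "X k \<in> measurable M (count_space UNIV)" for k
    using chain by (simp add: is_chain_def)
  define A where "A t = {\<omega>\<in>space M. \<forall>k\<in>{1..t}. X k \<omega> \<noteq> j}" for t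
  have [measurable]: "A t \<in> sets M" for t unfolding A_def by measurable
  have "survival_sum (trans_prob n \<pi>) {1..n} j i \<le> (\<Sum>t. emeasure M (A t))"
    unfolding survival_sum_def using survival_le_prob_avoid[OF chain i]
    by (intro suminf_le) (auto simp: A_def emeasure_eq_measure)
  also have "\<dots> = (\<integral>\<^sup>+ \<omega>. (\<Sum>t. indicator (A t) \<omega>) \<partial>M)"
    by (simp add: nn_integral_suminf)
  also have "\<dots> \<le> (\<integral>\<^sup>+ \<omega>. hit_time X j \<omega> \<partial>M)"
    unfolding A_def by (intro nn_integral_mono suminf_indicator_avoid_le_hit_time)
  finally show ?thesis .
qed

lemma trans_prob_nonneg:
  assumes "\<And>i. 2 \<le> i \<Longrightarrow> i \<le> n - 1 \<Longrightarrow> 0 \<le> \<pi> i \<and> \<pi> i \<le> 1"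
  shows "0 \<le> trans_prob n \<pi> i j"
  using assms[of i] by (auto simp: trans_prob_def)

lemma sum_trans_prob_first:
  fixes W :: "nat \<Rightarrow> ennreal"
  assumes "n > 1"
  shows "(\<Sum>j\<in>{1..n}. ennreal (trans_prob n \<pi> 1 j) * W j) = W 2"
proof -
  have "ennreal (trans_prob n \<pi> 1 j) * W j = (if j = 2 then W j else 0)" for j
    by (simp add: trans_prob_def)
  then show ?thesis using assms by (simp add: sum.delta)
qed

lemma sum_trans_prob_last:
  fixes W :: "nat \<Rightarrow> ennreal"
  assumes "n > 1"
  shows "(\<Sum>j\<in>{1..n}. ennreal (trans_prob n \<pi> n j) * W j) = W (n - 1)"
proof -
  have "ennreal (trans_prob n \<pi> n j) * W j = (if j = n - 1 then W j else 0)" for j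
    using assms by (simp add: trans_prob_def)
  then show ?thesis using assms by (simp add: sum.delta)
qed

lemma sum_trans_prob_interior:
  fixes W :: "nat \<Rightarrow> ennreal"
  assumes "2 \<le> i" "i \<le> n - 1"
  shows "(\<Sum>j\<in>{1..n}. ennreal (trans_prob n \<pi> i j) * W j)
           = ennreal (\<pi> i) * W (i + 1) + ennreal (1 - \<pi> i) * W (i - 1)"
proof -
  have "ennreal (trans_prob n \<pi> i j) * W j
      = (if j = i + 1 then ennreal (\<pi> i) * W j else 0)
        + (if j = i - 1 then ennreal (1 - \<pi> i) * W j else 0)" for j
    using assms unfolding trans_prob_def by auto
  moreover have "i + 1 \<in> {1..n}" "i - 1 \<in> {1..n}"
    using assms by auto
  ultimately show ?thesis
    by (simp add: sum.distrib sum.delta)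
qed

lemma first_step_gap:
  fixes x y z :: ennreal and a b :: real
  assumes ab: "0 \<le> a" "0 \<le> b" "a + b = 1"
    and y: "y = 1 + ennreal a * z + ennreal b * x"
    and fin: "x < \<top>" "y < \<top>"
    and gap: "1 \<le> enn2real x - enn2real y"
  shows "0 < a" and "z < \<top>"
    and "a * (enn2real y - enn2real z) = 1 + b * (enn2real x - enn2real y)"
    and "1 \<le> enn2real y - enn2real z"
proof -
  define x' y' where "x' = enn2real x" and "y' = enn2real y"
  have x: "x = ennreal x'" "0 \<le> x'" and y': "y = ennreal y'" "0 \<le> y'"
    using fin by (simp_all add: x'_def y'_def ennreal_enn2real)
  show a: "0 < a"
  proof (rule ccontr)
    assume "\<not> 0 < a"
    then have "y' = enn2real (1 + ennreal x')"
      using ab y x by (simp add: y'_def)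
    then have "y' = 1 + x'"
      using x by (simp add: enn2real_plus)
    then show False using gap by (simp add: x'_def y'_def)
  qed
  have "ennreal a * z \<le> y" unfolding y by (simp add: add.commute add_increasing2)
  then have "ennreal a * z < \<top>"
    using fin(2) by (rule le_less_trans)
  then show z_fin: "z < \<top>"
    using a by (auto simp: ennreal_mult_less_top)
  define z' where "z' = enn2real z"
  have z: "z = ennreal z'" "0 \<le> z'"
    using z_fin by (simp_all add: z'_def ennreal_enn2real)
  have "y = ennreal (1 + a * z' + b * x')"
    using y x z ab by (simp add: ennreal_plus ennreal_mult)
  moreover have "0 \<le> 1 + a * z' + b * x'"
    using x z ab by simp
  ultimately have y_eq: "y' = 1 + a * z' + b * x'"
    unfolding y'_def by (simp only: enn2real_ennreal)
  have b_eq: "b = 1 - a"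
    using ab by simp
  have eq: "a * (y' - z') = 1 + b * (x' - y')"
    unfolding y_eq b_eq by (simp add: algebra_simps)
  then show "a * (enn2real y - enn2real z) = 1 + b * (enn2real x - enn2real y)"
    by (simp add: x'_def y'_def z'_def)
  have ge1: "1 \<le> a * (y' - z')"
    using eq gap ab by (simp add: x'_def y'_def)
  then have "0 < y' - z'"
    using a zero_less_mult_pos[of a "y' - z'"] by linarith
  then have "a * (y' - z') \<le> y' - z'"
    using ab by (simp add: mult_left_le_one_le)
  with ge1 show "1 \<le> enn2real y - enn2real z"
    by (simp add: y'_def z'_def)
qed

text \<open>\<open>W k\<close> plays the expected time to reach \<open>n\<close> from \<open>k\<close>; then \<open>h k = W k - W (k + 1)\<close> is
  the expected time to cross the edge \<open>{k, k + 1}\<close> upwards.\<close>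

lemma birth_death_gaps:
  fixes W :: "nat \<Rightarrow> ennreal" and a b :: "nat \<Rightarrow> real"
  assumes "n > 1" and W_n: "W n = 0" and W_1: "W 1 = 1 + W 2"
    and ab: "\<And>k. 2 \<le> k \<Longrightarrow> k \<le> n - 1 \<Longrightarrow> 0 \<le> a k \<and> 0 \<le> b k \<and> a k + b k = 1"
    and W_k: "\<And>k. 2 \<le> k \<Longrightarrow> k \<le> n - 1 \<Longrightarrow>
                W k = 1 + ennreal (a k) * W (k + 1) + ennreal (b k) * W (k - 1)"
    and fin: "W 1 < \<top>"
  obtains h where "h 1 = 1"
    and "\<And>k. 2 \<le> k \<Longrightarrow> k \<le> n - 1 \<Longrightarrow> 0 < a k \<and> a k * h k = 1 + b k * h (k - 1)"
    and "\<And>k. 1 \<le> k \<Longrightarrow> k \<le> n - 1 \<Longrightarrow> 1 \<le> h k"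
    and "W 1 = ennreal (\<Sum>k=1..n-1. h k)"
proof -
  define h where "h k = enn2real (W k) - enn2real (W (k + 1))" for k
  have W_2: "W 2 < \<top>"
    using fin W_1 by (simp add: ennreal_add_less_top)
  have h_1: "h 1 = 1"
    using W_1 W_2 by (simp add: h_def enn2real_plus numeral_2_eq_2 less_top)
  have inv: "W k < \<top> \<and> W (k + 1) < \<top> \<and> 1 \<le> h k \<and>
      (2 \<le> k \<longrightarrow> 0 < a k \<and> a k * h k = 1 + b k * h (k - 1))"
    if "1 \<le> k" "k \<le> n - 1" for k
    using that
  proof (induction k rule: nat_induct_at_least)
    case base
    then show ?case using fin W_2 h_1 by (simp add: numeral_2_eq_2)
  next
    case (Suc k)
    then have IH: "W k < \<top>" "W (Suc k) < \<top>" "1 \<le> enn2real (W k) - enn2real (W (Suc k))"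
      by (auto simp: h_def)
    have k: "2 \<le> Suc k" "Suc k \<le> n - 1"
      using Suc by auto
    have ab_k: "0 \<le> a (Suc k)" "0 \<le> b (Suc k)" "a (Suc k) + b (Suc k) = 1"
      using ab[OF k] by auto
    have W_Suc: "W (Suc k) = 1 + ennreal (a (Suc k)) * W (Suc k + 1) + ennreal (b (Suc k)) * W k"
      using W_k[OF k] by simp
    show ?case
      using first_step_gap[OF ab_k W_Suc IH] IH(2) by (simp add: h_def)
  qed
  have "(\<Sum>k=1..n-1. h k) = - (\<Sum>k=1..n-1. enn2real (W (Suc k)) - enn2real (W k))"
    by (simp add: h_def sum_negf[symmetric])
  also have "\<dots> = enn2real (W 1)"
    using \<open>n > 1\<close> W_n by (subst sum_Suc_diff) auto
  finally have "W 1 = ennreal (\<Sum>k=1..n-1. h k)"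
    using fin by (simp add: ennreal_enn2real)
  then show ?thesis
    using h_1 inv by (intro that[of h]) auto
qed

lemma expected_hit_time_up_crossings:
  assumes "n > 1"
    and \<pi>: "\<And>i. 2 \<le> i \<Longrightarrow> i \<le> n - 1 \<Longrightarrow> 0 \<le> \<pi> i \<and> \<pi> i \<le> 1"
    and chain: "is_chain M X n \<pi> 1"
    and fin: "(\<integral>\<^sup>+ \<omega>. hit_time X n \<omega> \<partial>M) < \<top>"
  obtains u where "u 1 = 1"
    and "\<And>k. 2 \<le> k \<Longrightarrow> k \<le> n - 1 \<Longrightarrow> 0 < \<pi> k \<and> \<pi> k * u k = 1 + (1 - \<pi> k) * u (k - 1)"
    and "\<And>k. 1 \<le> k \<Longrightarrow> k \<le> n - 1 \<Longrightarrow> 1 \<le> u k"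
    and "ennreal (\<Sum>k=1..n-1. u k) \<le> (\<integral>\<^sup>+ \<omega>. hit_time X n \<omega> \<partial>M)"
proof -
  define V where "V = survival_sum (trans_prob n \<pi>) {1..n} n"
  define W where "W = V(n := 0)"
  have V_le: "V 1 \<le> (\<integral>\<^sup>+ \<omega>. hit_time X n \<omega> \<partial>M)"
    unfolding V_def using \<open>n > 1\<close> by (intro survival_sum_le_expected_hit_time[OF chain]) simp
  have V_eq: "V i = 1 + (\<Sum>i'\<in>{1..n}. ennreal (trans_prob n \<pi> i i') * W i')" for i
    unfolding V_def W_def by (rule survival_sum_first_step[OF trans_prob_nonneg[OF \<pi>] finite_atLeastAtMost])
  have W_n: "W n = 0"
    by (simp add: W_def)
  have W_1: "W 1 = 1 + W 2"
    using V_eq[of 1] sum_trans_prob_first[OF \<open>n > 1\<close>] \<open>n > 1\<close> by (simp add: W_def)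
  have W_fin: "W 1 < \<top>"
    using V_le fin \<open>n > 1\<close> by (simp add: W_def)
  have weights: "0 \<le> \<pi> k \<and> 0 \<le> 1 - \<pi> k \<and> \<pi> k + (1 - \<pi> k) = 1" if "2 \<le> k" "k \<le> n - 1" for k
    using \<pi>[OF that] by simp
  have W_k: "W k = 1 + ennreal (\<pi> k) * W (k + 1) + ennreal (1 - \<pi> k) * W (k - 1)"
    if "2 \<le> k" "k \<le> n - 1" for k
    using V_eq[of k] sum_trans_prob_interior[OF that] that by (simp add: W_def add.assoc)
  obtain u where u: "u 1 = 1"
    "\<And>k. 2 \<le> k \<Longrightarrow> k \<le> n - 1 \<Longrightarrow> 0 < \<pi> k \<and> \<pi> k * u k = 1 + (1 - \<pi> k) * u (k - 1)"
    "\<And>k. 1 \<le> k \<Longrightarrow> k \<le> n - 1 \<Longrightarrow> 1 \<le> u k"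
    "W 1 = ennreal (\<Sum>k=1..n-1. u k)"
    using birth_death_gaps[OF \<open>n > 1\<close> W_n W_1 weights W_k W_fin] by blast
  moreover have "W 1 = V 1"
    using \<open>n > 1\<close> by (simp add: W_def)
  ultimately show ?thesis
    using V_le that by auto
qed

lemma expected_hit_time_down_crossings:
  assumes "n > 1"
    and \<pi>: "\<And>i. 2 \<le> i \<Longrightarrow> i \<le> n - 1 \<Longrightarrow> 0 \<le> \<pi> i \<and> \<pi> i \<le> 1"
    and chain: "is_chain N Y n \<pi> n"
    and fin: "(\<integral>\<^sup>+ \<omega>. hit_time Y 1 \<omega> \<partial>N) < \<top>"
  obtains d where "d (n - 1) = 1"
    and "\<And>k. 2 \<le> k \<Longrightarrow> k \<le> n - 1 \<Longrightarrow> 0 < 1 - \<pi> k \<and> (1 - \<pi> k) * d (k - 1) = 1 + \<pi> k * d k"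
    and "\<And>k. 1 \<le> k \<Longrightarrow> k \<le> n - 1 \<Longrightarrow> 1 \<le> d k"
    and "ennreal (\<Sum>k=1..n-1. d k) \<le> (\<integral>\<^sup>+ \<omega>. hit_time Y 1 \<omega> \<partial>N)"
proof -
  define V where "V = survival_sum (trans_prob n \<pi>) {1..n} 1"
  \<comment> \<open>Reflecting the states turns descent to \<open>1\<close> into ascent to \<open>n\<close>, so \<open>h (n - k)\<close>
    below is the expected time to cross \<open>{k, k + 1}\<close> downwards.\<close>
  define W where "W k = (V(1 := 0)) (n + 1 - k)" for k
  have V_le: "V n \<le> (\<integral>\<^sup>+ \<omega>. hit_time Y 1 \<omega> \<partial>N)"
    unfolding V_def using \<open>n > 1\<close> by (intro survival_sum_le_expected_hit_time[OF chain]) simp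
  have V_eq: "V i = 1 + (\<Sum>i'\<in>{1..n}. ennreal (trans_prob n \<pi> i i') * (V(1 := 0)) i')" for i
    unfolding V_def by (rule survival_sum_first_step[OF trans_prob_nonneg[OF \<pi>] finite_atLeastAtMost])
  have W_n: "W n = 0"
    by (simp add: W_def)
  have W_1: "W 1 = 1 + W 2"
    using V_eq[of n] sum_trans_prob_last[OF \<open>n > 1\<close>] \<open>n > 1\<close> by (simp add: W_def)
  have W_fin: "W 1 < \<top>"
    using V_le fin \<open>n > 1\<close> by (simp add: W_def)
  have weights: "0 \<le> 1 - \<pi> (n + 1 - k) \<and> 0 \<le> \<pi> (n + 1 - k) \<and> (1 - \<pi> (n + 1 - k)) + \<pi> (n + 1 - k) = 1"
    if "2 \<le> k" "k \<le> n - 1" for k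
    using \<pi>[of "n + 1 - k"] that by simp
  have W_k: "W k = 1 + ennreal (1 - \<pi> (n + 1 - k)) * W (k + 1) + ennreal (\<pi> (n + 1 - k)) * W (k - 1)"
    if "2 \<le> k" "k \<le> n - 1" for k
  proof -
    have i: "2 \<le> n + 1 - k" "n + 1 - k \<le> n - 1" "n + 1 - k + 1 = n + 1 - (k - 1)" "n + 1 - k - 1 = n + 1 - (k + 1)" "n + 1 - k \<noteq> 1"
      using that by auto
    show ?thesis
      using V_eq[of "n + 1 - k"] sum_trans_prob_interior[OF i(1,2)] i(3-5) that
      by (simp add: W_def add_ac)
  qed
  obtain h where h: "h 1 = 1"
    "\<And>k. 2 \<le> k \<Longrightarrow> k \<le> n - 1 \<Longrightarrow>
       0 < 1 - \<pi> (n + 1 - k) \<and> (1 - \<pi> (n + 1 - k)) * h k = 1 + \<pi> (n + 1 - k) * h (k - 1)"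
    "\<And>k. 1 \<le> k \<Longrightarrow> k \<le> n - 1 \<Longrightarrow> 1 \<le> h k"
    "W 1 = ennreal (\<Sum>k=1..n-1. h k)"
    using birth_death_gaps[OF \<open>n > 1\<close> W_n W_1 weights W_k W_fin] by blast
  show ?thesis
  proof (rule that[of "\<lambda>k. h (n - k)"])
    show "h (n - (n - 1)) = 1"
      using h(1) \<open>n > 1\<close> by simp
    fix k assume k: "2 \<le> k" "k \<le> n - 1"
    have "n - (k - 1) = n + 1 - k" "n + 1 - (n + 1 - k) = k" "n + 1 - k - 1 = n - k"
      using k by auto
    then show "0 < 1 - \<pi> k \<and> (1 - \<pi> k) * h (n - (k - 1)) = 1 + \<pi> k * h (n - k)"
      using h(2)[of "n + 1 - k"] k by auto
  next
    fix k assume "1 \<le> k" "k \<le> n - 1"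
    then show "1 \<le> h (n - k)"
      by (intro h(3)) auto
  next
    have "(\<Sum>k=1..n-1. h (n - k)) = (\<Sum>k=1..n-1. h k)"
      by (rule sum.reindex_bij_witness[where i="\<lambda>k. n - k" and j="\<lambda>k. n - k"]) auto
    then show "ennreal (\<Sum>k=1..n-1. h (n - k)) \<le> (\<integral>\<^sup>+ \<omega>. hit_time Y 1 \<omega> \<partial>N)"
      using h(4) V_le \<open>n > 1\<close> by (simp add: W_def)
  qed
qed

text \<open>Conductances of the edges \<open>{k, k + 1}\<close> (detailed balance: \<open>p k * c (k - 1) = (1 - p k) * c k\<close>),
  normalised by \<open>c 1 = 1\<close>; the value at \<open>0\<close> is junk.\<close>

primrec edge_weight :: "(nat \<Rightarrow> real) \<Rightarrow> nat \<Rightarrow> real" where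
  "edge_weight p 0 = 1"
| "edge_weight p (Suc k) = (if k = 0 then 1 else edge_weight p k * p (Suc k) / (1 - p (Suc k)))"

lemma edge_weight_pos:
  assumes "\<And>k. 2 \<le> k \<Longrightarrow> k \<le> m \<Longrightarrow> 0 < p k \<and> p k < 1" and "k \<le> m"
  shows "0 < edge_weight p k"
  using assms(2) by (induction k) (use assms(1) in auto)

lemma edge_weight_step:
  assumes "2 \<le> k"
  shows "edge_weight p k = edge_weight p (k - 1) * p k / (1 - p k)"
  using assms by (cases k) auto

lemma edge_weight_divide:
  assumes "2 \<le> k" "p k < 1"
  shows "edge_weight p (k - 1) / (1 - p k) = edge_weight p (k - 1) + edge_weight p k"
  using assms by (simp add: edge_weight_step field_simps)

lemma edge_weight_up_crossing:
  assumes p: "\<And>k. 2 \<le> k \<Longrightarrow> k \<le> m \<Longrightarrow> 0 < p k \<and> p k < 1"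
    and u_1: "u 1 = 1"
    and u_rec: "\<And>k. 2 \<le> k \<Longrightarrow> k \<le> m \<Longrightarrow> p k * u k = 1 + (1 - p k) * u (k - 1)"
    and k: "1 \<le> k" "k \<le> m"
  shows "edge_weight p k * u k = edge_weight p k + 2 * (\<Sum>j=1..<k. edge_weight p j)"
  using k
proof (induction k rule: nat_induct_at_least)
  case base
  then show ?case using u_1 by simp
next
  case (Suc k)
  let ?c = "edge_weight p"
  have k': "2 \<le> Suc k" "Suc k \<le> m"
    using Suc by auto
  have p_k: "0 < 1 - p (Suc k)"
    using p[OF k'] by simp
  have "?c (Suc k) * u (Suc k) = ?c k / (1 - p (Suc k)) * (p (Suc k) * u (Suc k))"
    using edge_weight_step[OF k'(1)] by simp
  also have "\<dots> = ?c k / (1 - p (Suc k)) * (1 + (1 - p (Suc k)) * u k)"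
    using u_rec[OF k'] by simp
  also have "\<dots> = ?c k / (1 - p (Suc k)) + ?c k * u k"
    using p_k by (simp add: field_simps)
  also have "\<dots> = ?c k + ?c (Suc k) + ?c k * u k"
    using edge_weight_divide[OF k'(1)] p[OF k'] by simp
  also have "\<dots> = ?c (Suc k) + 2 * (\<Sum>j=1..<Suc k. ?c j)"
    using Suc by simp
  finally show ?case .
qed

lemma edge_weight_down_crossing:
  assumes p: "\<And>k. 2 \<le> k \<Longrightarrow> k \<le> m \<Longrightarrow> 0 < p k \<and> p k < 1"
    and d_m: "d m = 1"
    and d_rec: "\<And>k. 2 \<le> k \<Longrightarrow> k \<le> m \<Longrightarrow> (1 - p k) * d (k - 1) = 1 + p k * d k"
    and k: "1 \<le> k" "k \<le> m"
  shows "edge_weight p k * d k = edge_weight p k + 2 * (\<Sum>j=k+1..m. edge_weight p j)"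
  using k(2,1)
proof (induction k rule: inc_induct)
  case base
  then show ?case using d_m by simp
next
  case (step k)
  let ?c = "edge_weight p"
  have k': "2 \<le> Suc k" "Suc k \<le> m"
    using step by auto
  have p_k: "0 < 1 - p (Suc k)"
    using p[OF k'] by simp
  have "?c k * d k = ?c k / (1 - p (Suc k)) * ((1 - p (Suc k)) * d k)"
    using p_k by simp
  also have "\<dots> = ?c k / (1 - p (Suc k)) * (1 + p (Suc k) * d (Suc k))"
    using d_rec[OF k'] by simp
  also have "\<dots> = ?c k / (1 - p (Suc k)) + ?c (Suc k) * d (Suc k)"
    using edge_weight_step[OF k'(1)] by (simp add: algebra_simps add_divide_distrib)
  also have "\<dots> = ?c k + ?c (Suc k) + ?c (Suc k) * d (Suc k)"
    using edge_weight_divide[OF k'(1)] p[OF k'] by simp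
  also have "\<dots> = ?c k + 2 * (\<Sum>j=k+1..m. ?c j)"
    using step k' by (simp add: sum.atLeast_Suc_atMost)
  finally show ?case .
qed

lemma card_squared_le_sum_mult_sum_inverse:
  fixes c :: "'a \<Rightarrow> real"
  assumes "\<And>i. i \<in> I \<Longrightarrow> 0 < c i"
  shows "real (card I) ^ 2 \<le> (\<Sum>i\<in>I. c i) * (\<Sum>i\<in>I. 1 / c i)"
proof -
  have "(\<Sum>i\<in>I. sqrt (c i) * (1 / sqrt (c i)))\<^sup>2
      \<le> (\<Sum>i\<in>I. (sqrt (c i))\<^sup>2) * (\<Sum>i\<in>I. (1 / sqrt (c i))\<^sup>2)"
    by (rule Cauchy_Schwarz_ineq_sum)
  moreover have "(\<Sum>i\<in>I. sqrt (c i) * (1 / sqrt (c i))) = (\<Sum>i\<in>I. 1)"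
    using assms by (intro sum.cong) force+
  moreover have "(\<Sum>i\<in>I. (sqrt (c i))\<^sup>2) = (\<Sum>i\<in>I. c i)"
    using assms by (intro sum.cong) (auto simp: less_imp_le)
  moreover have "(\<Sum>i\<in>I. (1 / sqrt (c i))\<^sup>2) = (\<Sum>i\<in>I. 1 / c i)"
    using assms by (intro sum.cong) (auto simp: less_imp_le power_divide)
  ultimately show ?thesis by simp
qed

lemma commute_time_lower_bound:
  assumes p: "\<And>k. 2 \<le> k \<Longrightarrow> k \<le> m \<Longrightarrow> 0 < p k \<and> p k < 1"
    and "u 1 = 1" "\<And>k. 2 \<le> k \<Longrightarrow> k \<le> m \<Longrightarrow> p k * u k = 1 + (1 - p k) * u (k - 1)"
    and "d m = 1" "\<And>k. 2 \<le> k \<Longrightarrow> k \<le> m \<Longrightarrow> (1 - p k) * d (k - 1) = 1 + p k * d k"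
  shows "2 * real (m ^ 2) \<le> (\<Sum>k=1..m. u k) + (\<Sum>k=1..m. d k)"
proof -
  let ?c = "edge_weight p"
  define C where "C = (\<Sum>j=1..m. ?c j)"
  have c_pos: "0 < ?c k" if "k \<le> m" for k
    using edge_weight_pos[OF p that] .
  have crossings: "u k + d k = 2 * C / ?c k" if k: "1 \<le> k" "k \<le> m" for k
  proof -
    have "{1..m} = {1..<k} \<union> {k..m}"
      using k by auto
    then have "C = (\<Sum>j=1..<k. ?c j) + (\<Sum>j=k..m. ?c j)"
      unfolding C_def by (simp add: sum.union_disjoint ivl_disj_int)
    also have "(\<Sum>j=k..m. ?c j) = ?c k + (\<Sum>j=k+1..m. ?c j)"
      using k by (simp add: sum.atLeast_Suc_atMost)
    finally have "?c k * (u k + d k) = 2 * C"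
      using edge_weight_up_crossing[OF p assms(2,3) k] edge_weight_down_crossing[OF p assms(4,5) k]
      by (simp add: algebra_simps)
    moreover have "0 < ?c k"
      using c_pos k by simp
    ultimately show ?thesis
      by (simp add: field_simps)
  qed
  have "real (card {1..m}) ^ 2 \<le> C * (\<Sum>k=1..m. 1 / ?c k)"
    unfolding C_def by (rule card_squared_le_sum_mult_sum_inverse) (simp add: c_pos)
  also have "2 * (C * (\<Sum>k=1..m. 1 / ?c k)) = (\<Sum>k=1..m. u k + d k)"
    by (simp add: crossings sum_distrib_left)
  finally show ?thesis
    by (simp add: sum.distrib)
qed

theorem lemma1:
  fixes n :: nat and \<pi> :: "nat \<Rightarrow> real"
    and M :: "'a measure" and X :: "nat \<Rightarrow> 'a \<Rightarrow> nat"
    and N :: "'b measure" and Y :: "nat \<Rightarrow> 'b \<Rightarrow> nat"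
  assumes "n > 1"
    and "\<And>i. 2 \<le> i \<Longrightarrow> i \<le> n - 1 \<Longrightarrow> 0 \<le> \<pi> i \<and> \<pi> i \<le> 1"
    and "is_chain M X n \<pi> 1"
    and "is_chain N Y n \<pi> n"
  shows "(\<integral>\<^sup>+ \<omega>. hit_time X n \<omega> \<partial>M) + (\<integral>\<^sup>+ \<omega>. hit_time Y 1 \<omega> \<partial>N)
           \<ge> 2 * of_nat ((n - 1) ^ 2)"
proof (cases "(\<integral>\<^sup>+ \<omega>. hit_time X n \<omega> \<partial>M) < \<top> \<and> (\<integral>\<^sup>+ \<omega>. hit_time Y 1 \<omega> \<partial>N) < \<top>")
  case False
  then show ?thesis
    by (auto simp: less_top[symmetric])
next
  case True
  obtain u where u: "u 1 = 1"
      "\<And>k. 2 \<le> k \<Longrightarrow> k \<le> n - 1 \<Longrightarrow> 0 < \<pi> k \<and> \<pi> k * u k = 1 + (1 - \<pi> k) * u (k - 1)"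
      "\<And>k. 1 \<le> k \<Longrightarrow> k \<le> n - 1 \<Longrightarrow> 1 \<le> u k"
      "ennreal (\<Sum>k=1..n-1. u k) \<le> (\<integral>\<^sup>+ \<omega>. hit_time X n \<omega> \<partial>M)"
    using expected_hit_time_up_crossings[OF assms(1,2,3)] True by blast
  obtain d where d: "d (n - 1) = 1"
      "\<And>k. 2 \<le> k \<Longrightarrow> k \<le> n - 1 \<Longrightarrow> 0 < 1 - \<pi> k \<and> (1 - \<pi> k) * d (k - 1) = 1 + \<pi> k * d k"
      "\<And>k. 1 \<le> k \<Longrightarrow> k \<le> n - 1 \<Longrightarrow> 1 \<le> d k"
      "ennreal (\<Sum>k=1..n-1. d k) \<le> (\<integral>\<^sup>+ \<omega>. hit_time Y 1 \<omega> \<partial>N)"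
    using expected_hit_time_down_crossings[OF assms(1,2,4)] True by blast
  have "2 * real ((n - 1) ^ 2) \<le> (\<Sum>k=1..n-1. u k) + (\<Sum>k=1..n-1. d k)"
    by (rule commute_time_lower_bound[where p = \<pi>]) (use u d in auto)
  then have "ennreal (2 * real ((n - 1) ^ 2)) \<le> ennreal ((\<Sum>k=1..n-1. u k) + (\<Sum>k=1..n-1. d k))"
    by (rule ennreal_leI)
  also have "\<dots> = ennreal (\<Sum>k=1..n-1. u k) + ennreal (\<Sum>k=1..n-1. d k)"
    using u(3) d(3) by (intro ennreal_plus sum_nonneg) force+
  also have "\<dots> \<le> (\<integral>\<^sup>+ \<omega>. hit_time X n \<omega> \<partial>M) + (\<integral>\<^sup>+ \<omega>. hit_time Y 1 \<omega> \<partial>N)"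
    using u(4) d(4) by (rule add_mono)
  finally show ?thesis
    by (simp add: ennreal_mult ennreal_of_nat_eq_real_of_nat)
qed

end
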